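(* In the binary setting with $R_p=0$ and $0<\beta<1$, the function $U(s,\cdot)$ restricted to $[0,Q-d_l]$ has at most one local maximum point. Writing $$G(\pi)=\frac{\lambda(\kappa-\pi)^\beta w(p)}{\pi^\beta w(1-p)}\Big(1+\frac{\kappa(d_h-Q)}{(\kappa-\pi)(Q-d_l)}\Big)^{\beta-1},$$ if $G(\pi)<1$ then the maximum of $U(s,\cdot)$ over $[0,Q-d_l]$ is attained at $q_s=Q-d_l$, and if $G(\pi)\ge1$ it is attained at the point $$q_s=\frac{\frac{\kappa}{\kappa-\pi}(d_h-Q)}{\Big(\frac{w(1-p)\pi^\beta}{w(p)\lambda(\kappa-\pi)^\beta}\Big)^{\frac{1}{\beta-1}}-1}\in(0,Q-d_l].$$
   Context: Binary setting: $\kappa>0$, $0<d_l<Q<d_h$, $0<p<1$; the demand equals $d_h$ with probability $p$ and $d_l$ with probability $1-p$. $L(y)=0$ if $y\ge0$, $L(y)=\kappa y$ if $y<0$. Value function $v(x)=x^\beta$ for $x\ge0$, $v(x)=-\lambda(-x)^\beta$ for $x<0$, with $\lambda\ge1$. Weighting $w(q)=\exp(-(-\ln q)^\mu)$, $0<\mu\le1$. Price $\pi=\pi_b^{\max}\in(0,\kappa)$. Seller's utility $U(s,q_s)=w(1-p)\,v\big(\pi q_s+L(Q-q_s-d_l)-R_p\big)+w(p)\,v\big(\pi q_s+L(Q-q_s-d_h)-R_p\big)$ for $q_s\ge0$. *)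

theory Defs
  imports Complex_Main
begin

definition Lpen :: "real \<Rightarrow> real \<Rightarrow> real" where
  "Lpen \<kappa> y = (if y \<ge> 0 then 0 else \<kappa> * y)"

definition vfun :: "real \<Rightarrow> real \<Rightarrow> real \<Rightarrow> real" where
  "vfun lam \<beta> x = (if x \<ge> 0 then x powr \<beta> else - lam * ((- x) powr \<beta>))"

definition wfun :: "real \<Rightarrow> real \<Rightarrow> real" where
  "wfun \<mu> q = exp (- ((- ln q) powr \<mu>))"

definition Useller ::
  "real \<Rightarrow> real \<Rightarrow> real \<Rightarrow> real \<Rightarrow> real \<Rightarrow> real \<Rightarrow> real \<Rightarrow> real \<Rightarrow> real \<Rightarrow> real \<Rightarrow> real \<Rightarrow> real" where
  "Useller \<kappa> lam \<beta> \<mu> p Q dl dh \<pi> Rp qs =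
     wfun \<mu> (1 - p) * vfun lam \<beta> (\<pi> * qs + Lpen \<kappa> (Q - qs - dl) - Rp)
   + wfun \<mu> p * vfun lam \<beta> (\<pi> * qs + Lpen \<kappa> (Q - qs - dh) - Rp)"

definition local_max_on :: "real set \<Rightarrow> (real \<Rightarrow> real) \<Rightarrow> real \<Rightarrow> bool" where
  "local_max_on S f x \<longleftrightarrow> x \<in> S \<and> (\<exists>e>0. \<forall>y\<in>S. \<bar>y - x\<bar> < e \<longrightarrow> f y \<le> f x)"

end

theory Submission imports Defs begin

text \<open>For \<open>0 \<le> q \<le> Q - dl\<close> only the high-demand state is short, so
  \<open>U q = A q\<^sup>\<beta> - B (c + k q)\<^sup>\<beta>\<close> with \<open>A = w(1-p) \<pi>\<^sup>\<beta>\<close>, \<open>B = \<lambda> w(p)\<close>, \<open>k = \<kappa> - \<pi> > 0\<close> and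
  \<open>c = \<kappa> (dh - Q) > 0\<close>. Writing \<open>A = B k\<^sup>\<beta> s powr (\<beta> - 1)\<close>, the derivative of \<open>U\<close> has the
  sign of the affine function \<open>c + k q - k s q\<close>, which is positive at \<open>0\<close>. So \<open>U\<close> strictly increases
  up to the root \<open>c / (k (s - 1))\<close> of that function, or up to \<open>Q - dl\<close> if the root lies beyond it,
  and strictly decreases afterwards; such a peak is the maximum and the only local maximum.
  The test \<open>G < 1\<close> says exactly that the root lies beyond \<open>Q - dl\<close>.\<close>

lemma monotone_on_cong:
  assumes "\<And>x. x \<in> A \<Longrightarrow> f x = g x"
  shows "monotone_on A r s f = monotone_on A r s g"
  using assms by (auto simp: monotone_on_def)

lemma le_peak_if_strict_mono_antimono:
  fixes f :: "real \<Rightarrow> real"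
  assumes "strict_mono_on {a..p} f" "strict_antimono_on {p..b} f" "q \<in> {a..b}"
  shows "f q \<le> f p"
proof -
  consider "q < p" | "q = p" | "p < q" by linarith
  then show ?thesis
  proof cases
    case 1
    then have "f q < f p" using assms(3) by (intro strict_mono_onD[OF assms(1)]) auto
    then show ?thesis by simp
  next
    case 3
    then have "f q < f p" using assms(3) by (intro monotone_onD[OF assms(2)]) auto
    then show ?thesis by simp
  qed simp
qed

lemma local_max_on_eq_peak_if_strict_mono_antimono:
  fixes f :: "real \<Rightarrow> real"
  assumes "strict_mono_on {a..p} f" "strict_antimono_on {p..b} f" "p \<in> {a..b}"
    and "local_max_on {a..b} f x"
  shows "x = p"
proof (rule ccontr)
  obtain e where "e > 0" and x: "x \<in> {a..b}"
    and max: "\<And>y. y \<in> {a..b} \<Longrightarrow> \<bar>y - x\<bar> < e \<Longrightarrow> f y \<le> f x"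
    using assms(4) unfolding local_max_on_def by blast
  assume "x \<noteq> p"
  then consider "x < p" | "p < x" by linarith
  then show False
  proof cases
    case 1
    define y where "y = min (x + e/2) p"
    have "y \<in> {a..b}" "\<bar>y - x\<bar> < e" "x < y" "y \<le> p"
      using 1 \<open>e > 0\<close> x assms(3) unfolding y_def by auto
    then have "f x < f y" using x by (intro strict_mono_onD[OF assms(1)]) auto
    with max \<open>y \<in> {a..b}\<close> \<open>\<bar>y - x\<bar> < e\<close> show False by fastforce
  next
    case 2
    define y where "y = max (x - e/2) p"
    have "y \<in> {a..b}" "\<bar>y - x\<bar> < e" "y < x" "p \<le> y"
      using 2 \<open>e > 0\<close> x assms(3) unfolding y_def by auto
    then have "f x < f y" using x by (intro monotone_onD[OF assms(2)]) auto
    with max \<open>y \<in> {a..b}\<close> \<open>\<bar>y - x\<bar> < e\<close> show False by fastforce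
  qed
qed

lemma powr_neg_less_iff:
  fixes x y e :: real
  assumes "e < 0" "x > 0" "y > 0"
  shows "x powr e < y powr e \<longleftrightarrow> y < x"
  by (metis assms powr_less_mono2_neg linorder_neqE_linordered_idom order_less_asym order_less_irrefl)

lemma power_gap_has_real_derivative:
  fixes A B c k s \<beta> q :: real
  assumes "B > 0" "k > 0" "c > 0" "s > 0" "A = B * k powr \<beta> * s powr (\<beta> - 1)" "q > 0"
  shows "((\<lambda>q. A * q powr \<beta> - B * (c + k*q) powr \<beta>) has_real_derivative
          B * \<beta> * k * ((k*s*q) powr (\<beta> - 1) - (c + k*q) powr (\<beta> - 1))) (at q)"
proof -
  have "c + k*q > 0" using assms by (simp add: add_pos_pos)
  then have "((\<lambda>q. A * q powr \<beta> - B * (c + k*q) powr \<beta>) has_real_derivative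
          A * (\<beta> * q powr (\<beta> - 1)) - B * (\<beta> * (c + k*q) powr (\<beta> - 1) * k)) (at q)"
    using \<open>q > 0\<close> by (auto intro!: derivative_eq_intros)
  moreover have "A * (\<beta> * q powr (\<beta> - 1)) = \<beta> * (B * k * (k*s*q) powr (\<beta> - 1))"
  proof -
    have "k * k powr (\<beta> - 1) = k powr \<beta>"
      using \<open>k > 0\<close> by (simp add: powr_add[symmetric] powr_mult_base)
    then show ?thesis using assms by (simp add: powr_mult algebra_simps)
  qed
  ultimately show ?thesis by (simp add: algebra_simps)
qed

lemma power_gap_continuous_on:
  fixes A B c k \<beta> :: real
  assumes "k > 0" "c > 0" "\<beta> > 0"
  shows "continuous_on {0..} (\<lambda>q. A * q powr \<beta> - B * (c + k*q) powr \<beta>)"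
proof -
  have "continuous_on {0..} (\<lambda>q. q powr \<beta>)"
    by (rule continuous_on_powr') (use assms in \<open>auto intro: continuous_intros\<close>)
  moreover have "continuous_on {0..} (\<lambda>q. (c + k*q) powr \<beta>)"
  proof (rule continuous_on_powr)
    have "c + k*q > 0" if "q \<ge> 0" for q
      using assms that by (simp add: add_pos_nonneg)
    then show "\<forall>q\<in>{0..}. c + k*q \<noteq> 0"
      by (metis atLeast_iff less_irrefl)
  qed (auto intro: continuous_intros)
  ultimately show ?thesis by (intro continuous_on_diff continuous_on_mult_left)
qed

lemma power_gap_strict_mono_on:
  fixes A B c k s \<beta> x y :: real
  assumes "B > 0" "k > 0" "c > 0" "s > 0" "0 < \<beta>" "\<beta> < 1"
    and "A = B * k powr \<beta> * s powr (\<beta> - 1)" "0 \<le> x"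
    and "\<And>q. x < q \<Longrightarrow> q < y \<Longrightarrow> k*s*q < c + k*q"
  shows "strict_mono_on {x..y} (\<lambda>q. A * q powr \<beta> - B * (c + k*q) powr \<beta>)"
proof (rule strict_mono_onI)
  fix r t assume "r \<in> {x..y}" "t \<in> {x..y}" "r < t"
  show "A * r powr \<beta> - B * (c + k*r) powr \<beta> < A * t powr \<beta> - B * (c + k*t) powr \<beta>"
  proof (rule DERIV_pos_imp_increasing_open[OF \<open>r < t\<close>])
    fix q assume "r < q" "q < t"
    then have "q > 0" "k*s*q < c + k*q"
      using \<open>r \<in> {x..y}\<close> \<open>t \<in> {x..y}\<close> assms(8,9) by auto
    then have "(c + k*q) powr (\<beta> - 1) < (k*s*q) powr (\<beta> - 1)"
      using assms by (intro powr_less_mono2_neg) auto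
    then show "\<exists>D. ((\<lambda>q. A * q powr \<beta> - B * (c + k*q) powr \<beta>) has_real_derivative D) (at q) \<and> D > 0"
      using power_gap_has_real_derivative[OF assms(1-4,7) \<open>q > 0\<close>] assms by auto
  next
    show "continuous_on {r..t} (\<lambda>q. A * q powr \<beta> - B * (c + k*q) powr \<beta>)"
      by (rule continuous_on_subset[OF power_gap_continuous_on[OF assms(2,3,5)]])
        (use \<open>r \<in> {x..y}\<close> assms(8) in auto)
  qed
qed

lemma power_gap_strict_antimono_on:
  fixes A B c k s \<beta> x y :: real
  assumes "B > 0" "k > 0" "c > 0" "s > 0" "0 < \<beta>" "\<beta> < 1"
    and "A = B * k powr \<beta> * s powr (\<beta> - 1)" "0 \<le> x"
    and "\<And>q. x < q \<Longrightarrow> q < y \<Longrightarrow> c + k*q < k*s*q"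
  shows "strict_antimono_on {x..y} (\<lambda>q. A * q powr \<beta> - B * (c + k*q) powr \<beta>)"
proof (rule monotone_onI)
  fix r t assume "r \<in> {x..y}" "t \<in> {x..y}" "r < t"
  show "A * t powr \<beta> - B * (c + k*t) powr \<beta> < A * r powr \<beta> - B * (c + k*r) powr \<beta>"
  proof (rule DERIV_neg_imp_decreasing_open[OF \<open>r < t\<close>])
    fix q assume "r < q" "q < t"
    then have "q > 0" "c + k*q < k*s*q"
      using \<open>r \<in> {x..y}\<close> \<open>t \<in> {x..y}\<close> assms(8,9) by auto
    then have "(k*s*q) powr (\<beta> - 1) < (c + k*q) powr (\<beta> - 1)"
      using assms by (intro powr_less_mono2_neg) (auto simp: add_pos_pos)
    then show "\<exists>D. ((\<lambda>q. A * q powr \<beta> - B * (c + k*q) powr \<beta>) has_real_derivative D) (at q) \<and> D < 0"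
      using power_gap_has_real_derivative[OF assms(1-4,7) \<open>q > 0\<close>] assms by (auto simp: mult_pos_neg)
  next
    show "continuous_on {r..t} (\<lambda>q. A * q powr \<beta> - B * (c + k*q) powr \<beta>)"
      by (rule continuous_on_subset[OF power_gap_continuous_on[OF assms(2,3,5)]])
        (use \<open>r \<in> {x..y}\<close> assms(8) in auto)
  qed
qed

lemma affine_crossing_point:
  fixes c k s m :: real
  assumes "k > 0" "c > 0" "m > 0"
  defines "p \<equiv> if k*s*m < k*m + c then m else c / (k*(s - 1))"
  shows "0 < p \<and> p \<le> m \<and> (\<forall>q. 0 \<le> q \<and> q < p \<longrightarrow> k*s*q < c + k*q)
    \<and> (\<forall>q. p < q \<and> q \<le> m \<longrightarrow> c + k*q < k*s*q)"
proof (cases "k*s*m < k*m + c")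
  case True
  have "k*s*q < c + k*q" if "0 \<le> q" "q < m" for q
  proof (cases "s \<le> 1")
    case True
    then have "k*s*q \<le> k*q" using that \<open>k > 0\<close> mult_right_mono[of s 1 q] by (simp add: mult.assoc)
    then show ?thesis using \<open>c > 0\<close> by linarith
  next
    case False
    then have "k*(s - 1)*q < k*(s - 1)*m" using that \<open>k > 0\<close> by simp
    then show ?thesis using \<open>k*s*m < k*m + c\<close> by (simp add: algebra_simps)
  qed
  then show ?thesis using True \<open>m > 0\<close> unfolding p_def by auto
next
  case False
  then have "c \<le> k*(s - 1)*m" by (simp add: algebra_simps)
  then have slope: "k*(s - 1) > 0"
    using assms(2,3) by (smt (verit) mult_nonpos_nonneg)
  have p: "p = c / (k*(s - 1))" using False unfolding p_def by simp
  show ?thesis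
    unfolding p using slope \<open>c > 0\<close> \<open>c \<le> k*(s - 1)*m\<close>
    by (auto simp: divide_le_eq less_divide_eq divide_less_eq algebra_simps)
qed

lemma power_gap_unimodal:
  fixes A B c k m \<beta> :: real
  assumes "A > 0" "B > 0" "k > 0" "c > 0" "m > 0" "0 < \<beta>" "\<beta> < 1"
  defines "f \<equiv> \<lambda>q. A * q powr \<beta> - B * (c + k*q) powr \<beta>"
    and "s \<equiv> (A / (B * k powr \<beta>)) powr (1 / (\<beta> - 1))"
  defines "p \<equiv> if B * k powr \<beta> / A * (1 + c / (k*m)) powr (\<beta> - 1) < 1 then m
               else c / (k*(s - 1))"
  shows "p \<in> {0<..m}" "strict_mono_on {0..p} f" "strict_antimono_on {p..m} f"
proof -
  have "s > 0" using assms unfolding s_def by simp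
  have s_powr: "s powr (\<beta> - 1) = A / (B * k powr \<beta>)"
    using assms unfolding s_def by (simp add: powr_powr)
  then have A_eq: "A = B * k powr \<beta> * s powr (\<beta> - 1)"
    using assms by simp
  have "B * k powr \<beta> / A * (1 + c / (k*m)) powr (\<beta> - 1) < 1
        \<longleftrightarrow> (1 + c / (k*m)) powr (\<beta> - 1) < s powr (\<beta> - 1)"
    using assms unfolding s_powr by (simp add: field_simps)
  also have "\<dots> \<longleftrightarrow> s < 1 + c / (k*m)"
    using assms \<open>s > 0\<close> by (intro powr_neg_less_iff) (auto simp: add_pos_pos)
  also have "\<dots> \<longleftrightarrow> k*s*m < k*m + c"
    using assms by (simp add: field_simps)
  finally have p: "p = (if k*s*m < k*m + c then m else c / (k*(s - 1)))"
    unfolding p_def by simp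
  have "0 < p" "p \<le> m" and below: "\<And>q. 0 \<le> q \<Longrightarrow> q < p \<Longrightarrow> k*s*q < c + k*q"
    and above: "\<And>q. p < q \<Longrightarrow> q \<le> m \<Longrightarrow> c + k*q < k*s*q"
    using affine_crossing_point[OF assms(3-5), of s] unfolding p by auto
  then show "p \<in> {0<..m}" by simp
  show "strict_mono_on {0..p} f"
    unfolding f_def using assms below
    by (intro power_gap_strict_mono_on[OF _ _ _ \<open>s > 0\<close> _ _ A_eq]) auto
  show "strict_antimono_on {p..m} f"
    unfolding f_def using assms above \<open>0 < p\<close>
    by (intro power_gap_strict_antimono_on[OF _ _ _ \<open>s > 0\<close> _ _ A_eq]) auto
qed

lemma wfun_pos: "wfun \<mu> q > 0"
  by (simp add: wfun_def)

lemma Useller_eq_power_gap: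
  assumes "0 \<le> \<pi>" "\<pi> < \<kappa>" "Q < dh" "q \<in> {0..Q - dl}"
  shows "Useller \<kappa> lam \<beta> \<mu> p Q dl dh \<pi> 0 q
    = wfun \<mu> (1 - p) * \<pi> powr \<beta> * q powr \<beta>
      - wfun \<mu> p * lam * (\<kappa> * (dh - Q) + (\<kappa> - \<pi>) * q) powr \<beta>"
proof -
  have "\<kappa> * (dh - Q) + (\<kappa> - \<pi>) * q > 0"
    using assms by (simp add: add_pos_nonneg)
  then have "vfun lam \<beta> (\<pi> * q + \<kappa> * (Q - q - dh) - 0)
      = - lam * (\<kappa> * (dh - Q) + (\<kappa> - \<pi>) * q) powr \<beta>"
    unfolding vfun_def by (simp add: algebra_simps)
  moreover have "vfun lam \<beta> (\<pi> * q + 0 - 0) = \<pi> powr \<beta> * q powr \<beta>"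
    using assms unfolding vfun_def by (simp add: powr_mult)
  moreover have "Lpen \<kappa> (Q - q - dl) = 0" "Lpen \<kappa> (Q - q - dh) = \<kappa> * (Q - q - dh)"
    using assms unfolding Lpen_def by auto
  ultimately show ?thesis unfolding Useller_def by simp
qed

theorem mainTheorem5:
  fixes \<kappa> lam \<beta> \<mu> p Q dl dh \<pi> :: real
  assumes "\<kappa> > 0" and "0 < dl" and "dl < Q" and "Q < dh"
    and "0 < p" and "p < 1" and "lam \<ge> 1" and "0 < \<mu>" and "\<mu> \<le> 1"
    and "0 < \<pi>" and "\<pi> < \<kappa>" and "0 < \<beta>" and "\<beta> < 1"
  defines "U \<equiv> Useller \<kappa> lam \<beta> \<mu> p Q dl dh \<pi> 0"
    and "G \<equiv> (lam * (\<kappa> - \<pi>) powr \<beta> * wfun \<mu> p) / (\<pi> powr \<beta> * wfun \<mu> (1 - p))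
             * (1 + \<kappa> * (dh - Q) / ((\<kappa> - \<pi>) * (Q - dl))) powr (\<beta> - 1)"
    and "qstar \<equiv> (\<kappa> / (\<kappa> - \<pi>) * (dh - Q)) /
             ((wfun \<mu> (1 - p) * \<pi> powr \<beta> / (wfun \<mu> p * lam * (\<kappa> - \<pi>) powr \<beta>))
                powr (1 / (\<beta> - 1)) - 1)"
  shows "(\<forall>x y. local_max_on {0..Q - dl} U x \<and> local_max_on {0..Q - dl} U y \<longrightarrow> x = y)
       \<and> (G < 1 \<longrightarrow> (\<forall>q\<in>{0..Q - dl}. U q \<le> U (Q - dl)))
       \<and> (G \<ge> 1 \<longrightarrow> qstar \<in> {0<..Q - dl} \<and> (\<forall>q\<in>{0..Q - dl}. U q \<le> U qstar))"
proof -
  define A B k c m where "A = wfun \<mu> (1 - p) * \<pi> powr \<beta>" and "B = wfun \<mu> p * lam"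
    and "k = \<kappa> - \<pi>" and "c = \<kappa> * (dh - Q)" and "m = Q - dl"
  define f where "f = (\<lambda>q. A * q powr \<beta> - B * (c + k*q) powr \<beta>)"
  define peak where "peak = (if G < 1 then m else qstar)"
  have pos: "A > 0" "B > 0" "k > 0" "c > 0" "m > 0"
    using assms wfun_pos[of \<mu>] unfolding A_def B_def k_def c_def m_def by auto
  have U_eq: "U q = f q" if "q \<in> {0..m}" for q
    using Useller_eq_power_gap[of \<pi> \<kappa> Q dh q dl] assms that
    unfolding U_def f_def A_def B_def c_def k_def m_def by simp
  have G_eq: "G = B * k powr \<beta> / A * (1 + c / (k*m)) powr (\<beta> - 1)"
    using pos unfolding G_def A_def B_def c_def k_def m_def by (simp add: field_simps)
  have qstar_eq: "qstar = c / (k * ((A / (B * k powr \<beta>)) powr (1 / (\<beta> - 1)) - 1))"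
    using pos unfolding qstar_def A_def B_def c_def k_def by (simp add: field_simps)
  have peak: "peak \<in> {0<..m}" "strict_mono_on {0..peak} f" "strict_antimono_on {peak..m} f"
    using power_gap_unimodal[OF pos assms(12,13)] unfolding peak_def G_eq qstar_eq f_def by blast+
  then have "strict_mono_on {0..peak} U" "strict_antimono_on {peak..m} U"
    using U_eq monotone_on_cong[of "{0..peak}" U f] monotone_on_cong[of "{peak..m}" U f] by auto
  then have "\<forall>q\<in>{0..m}. U q \<le> U peak" "\<forall>x. local_max_on {0..m} U x \<longrightarrow> x = peak"
    using le_peak_if_strict_mono_antimono local_max_on_eq_peak_if_strict_mono_antimono peak(1)
    by (blast, simp)
  then show ?thesis
    using peak(1) unfolding peak_def m_def by auto
qed

end
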